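(* Let $T$ be a finite tree with $m$ interior edges, and let $\mathcal{S}$ be the collection of all subtrees of $T$ that have exactly one interior edge. Then $$\sum_{S\in\mathcal{S}}(-1)^{|S|}=-m,$$ where $|S|$ denotes the number of edges of $S$.
   Context: A subtree of $T$ is a nonempty connected subgraph of $T$, identified with its (nonempty) edge set. An edge of a subtree $S$ is a leaf (edge) of $S$ if one of its endpoints has degree $1$ in $S$; an edge of $S$ is interior in $S$ if it is not a leaf of $S$. An interior edge of $T$ is an edge of $T$ that is interior in $T$ itself, i.e. neither endpoint is a leaf vertex of $T$. *)

theory Defs
  imports Main
begin

definition simple_graph :: "'a set \<Rightarrow> 'a set set \<Rightarrow> bool" where
  "simple_graph V E \<longleftrightarrow> finite V \<and> (\<forall>e\<in>E. e \<subseteq> V \<and> card e = 2)"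

definition adj :: "'a set set \<Rightarrow> 'a \<Rightarrow> 'a \<Rightarrow> bool" where
  "adj E u v \<longleftrightarrow> {u, v} \<in> E"

definition connected_graph :: "'a set \<Rightarrow> 'a set set \<Rightarrow> bool" where
  "connected_graph V E \<longleftrightarrow> (\<forall>u\<in>V. \<forall>v\<in>V. (adj E)\<^sup>*\<^sup>* u v)"

definition is_cycle :: "'a set set \<Rightarrow> 'a list \<Rightarrow> bool" where
  "is_cycle E vs \<longleftrightarrow> length vs \<ge> 3 \<and> distinct vs \<and>
     (\<forall>i < length vs. {vs ! i, vs ! ((i + 1) mod length vs)} \<in> E)"

definition acyclic_graph :: "'a set set \<Rightarrow> bool" where
  "acyclic_graph E \<longleftrightarrow> \<not> (\<exists>vs. is_cycle E vs)"

definition is_tree :: "'a set \<Rightarrow> 'a set set \<Rightarrow> bool" where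
  "is_tree V E \<longleftrightarrow> simple_graph V E \<and> V \<noteq> {} \<and> connected_graph V E \<and> acyclic_graph E"

text \<open>A subtree of T = (V,E): a nonempty connected subgraph, identified with its nonempty edge set.\<close>
definition subtree :: "'a set set \<Rightarrow> 'a set set \<Rightarrow> bool" where
  "subtree E S \<longleftrightarrow> S \<subseteq> E \<and> S \<noteq> {} \<and> connected_graph (\<Union>S) S"

definition degree_in :: "'a set set \<Rightarrow> 'a \<Rightarrow> nat" where
  "degree_in S v = card {e\<in>S. v \<in> e}"

definition leaf_edge :: "'a set set \<Rightarrow> 'a set \<Rightarrow> bool" where
  "leaf_edge S e \<longleftrightarrow> e \<in> S \<and> (\<exists>v\<in>e. degree_in S v = 1)"

definition interior_edge :: "'a set set \<Rightarrow> 'a set \<Rightarrow> bool" where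
  "interior_edge S e \<longleftrightarrow> e \<in> S \<and> \<not> leaf_edge S e"

end

theory Submission imports Defs begin

(* Let e = {u, v} be the unique interior edge of a subtree S. Every other edge of S is a leaf,
   and by connectivity each of them hangs off u or v; conversely, in an acyclic graph any set of
   edges consisting of e, at least one further edge at u and at least one further edge at v is a
   subtree whose only interior edge is e (a further edge {u, x} cannot share x with an edge at v
   without closing a triangle). So the subtrees with sole interior edge e are S = {e} + A + B with
   A, B nonempty sets of edges at u resp. v other than e, which forces e to be interior in T, and
   sum (-1)^|S| = - (sum_A (-1)^|A|) (sum_B (-1)^|B|) = -(-1)(-1) = -1.
   Summing over the m interior edges of T gives -m. *)

lemma sum_Pow_neg_one_pow_card:
  assumes "finite X" "X \<noteq> {}"
  shows "(\<Sum>A\<in>Pow X. (-1::'b::comm_ring_1) ^ card A) = 0"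
  using prod_diff_conv_sum[OF assms(1), of "\<lambda>_. 1" "\<lambda>_. 1"] assms
  by (simp add: power_0_left card_eq_0_iff)

lemma sum_nonempty_subsets_neg_one_pow_card:
  assumes "finite X" "X \<noteq> {}"
  shows "(\<Sum>A | A \<subseteq> X \<and> A \<noteq> {}. (-1::'b::comm_ring_1) ^ card A) = -1"
proof -
  have "Pow X = insert {} {A. A \<subseteq> X \<and> A \<noteq> {}}" by auto
  then have "(\<Sum>A\<in>Pow X. (-1::'b) ^ card A) = 1 + (\<Sum>A | A \<subseteq> X \<and> A \<noteq> {}. (-1) ^ card A)"
    using assms(1) by simp
  then show ?thesis
    using sum_Pow_neg_one_pow_card[OF assms] by (metis add.inverse_unique)
qed

lemma card_2_eq_doubleton:
  assumes "card h = 2" "u \<in> h" "v \<in> h" "u \<noteq> v"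
  shows "h = {u, v}"
  using assms by (auto simp: card_2_iff)

lemma card_2_obtain_other:
  assumes "card h = 2" "u \<in> h"
  obtains x where "h = {u, x}" "x \<noteq> u"
  using assms by (auto simp: card_2_iff)

definition incident :: "'a set set \<Rightarrow> 'a \<Rightarrow> 'a set set" where
  "incident S z = {f\<in>S. z \<in> f}"

lemma degree_in_eq_1_iff:
  assumes "e \<in> S" "z \<in> e"
  shows "degree_in S z = 1 \<longleftrightarrow> (\<forall>f\<in>S. z \<in> f \<longrightarrow> f = e)"
proof
  assume "degree_in S z = 1"
  then obtain a where a: "{f\<in>S. z \<in> f} = {a}"
    unfolding degree_in_def by (rule card_1_singletonE)
  show "\<forall>f\<in>S. z \<in> f \<longrightarrow> f = e"
  proof (intro ballI impI)
    fix f assume "f \<in> S" "z \<in> f"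
    then have "f \<in> {a}" "e \<in> {a}" using assms unfolding a[symmetric] by simp_all
    then show "f = e" by simp
  qed
next
  assume "\<forall>f\<in>S. z \<in> f \<longrightarrow> f = e"
  then have "{f\<in>S. z \<in> f} = {e}" using assms by blast
  then show "degree_in S z = 1" unfolding degree_in_def by simp
qed

lemma leaf_edge_iff:
  "leaf_edge S e \<longleftrightarrow> e \<in> S \<and> (\<exists>z\<in>e. \<forall>f\<in>S. z \<in> f \<longrightarrow> f = e)"
proof (cases "e \<in> S")
  case True
  then show ?thesis unfolding leaf_edge_def using degree_in_eq_1_iff[OF True] by blast
qed (simp add: leaf_edge_def)

lemma interior_edge_iff:
  "interior_edge S e \<longleftrightarrow> e \<in> S \<and> (\<forall>z\<in>e. \<exists>f\<in>S. z \<in> f \<and> f \<noteq> e)"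
  unfolding interior_edge_def leaf_edge_iff by blast

lemma interior_edge_mono:
  "interior_edge S e \<Longrightarrow> S \<subseteq> E \<Longrightarrow> interior_edge E e"
  unfolding interior_edge_iff by blast

lemma adj_sym: "adj S x y \<Longrightarrow> adj S y x"
  unfolding adj_def by (simp add: insert_commute)

lemma rtranclp_adj_sym: "(adj S)\<^sup>*\<^sup>* x y \<Longrightarrow> (adj S)\<^sup>*\<^sup>* y x"
proof (induction rule: rtranclp_induct)
  case (step y z)
  then show ?case using converse_rtranclp_into_rtranclp[of "adj S", OF adj_sym] by blast
qed simp

lemma rtranclp_adj_within_edge:
  assumes "h \<in> S" "card h = 2" "x \<in> h" "y \<in> h"
  shows "(adj S)\<^sup>*\<^sup>* x y"
proof (cases "x = y")
  case False
  then have "h = {x, y}" using card_2_eq_doubleton assms(2-4) by metis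
  then show ?thesis using assms(1) unfolding adj_def by auto
qed simp

lemma connected_graph_if_reachable_from:
  assumes "\<And>x. x \<in> \<Union>S \<Longrightarrow> (adj S)\<^sup>*\<^sup>* r x"
  shows "connected_graph (\<Union>S) S"
proof -
  have "(adj S)\<^sup>*\<^sup>* x y" if "x \<in> \<Union>S" "y \<in> \<Union>S" for x y
    using rtranclp_trans[OF rtranclp_adj_sym[OF assms[OF that(1)]] assms[OF that(2)]] .
  then show ?thesis unfolding connected_graph_def by blast
qed

lemma connected_graph_if_edges_meet_edge:
  assumes c2: "\<forall>h\<in>S. card h = 2" and eS: "{u, v} \<in> S" and meet: "\<forall>h\<in>S. u \<in> h \<or> v \<in> h"
  shows "connected_graph (\<Union>S) S"
proof (rule connected_graph_if_reachable_from)
  fix x assume "x \<in> \<Union>S"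
  then obtain h where h: "h \<in> S" "x \<in> h" by blast
  obtain c where c: "c \<in> {u, v}" "c \<in> h" using meet h(1) by blast
  have "(adj S)\<^sup>*\<^sup>* u c" using rtranclp_adj_within_edge[OF eS _ _ c(1)] c2 eS by blast
  also have "(adj S)\<^sup>*\<^sup>* c x" using rtranclp_adj_within_edge[OF h(1) _ c(2) h(2)] c2 h(1) by blast
  finally show "(adj S)\<^sup>*\<^sup>* u x" .
qed

lemma acyclic_graph_no_triangle:
  assumes "acyclic_graph E" "{u, v} \<in> E" "{v, x} \<in> E" "{u, x} \<in> E"
    and "u \<noteq> v" "x \<noteq> u" "x \<noteq> v"
  shows False
proof -
  have "{[u, v, x] ! i, [u, v, x] ! ((i + 1) mod 3)} \<in> E" if "i < 3" for i
  proof -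
    have "i = 0 \<or> i = 1 \<or> i = 2" using that by auto
    then show ?thesis using assms(2-4) by (elim disjE) (simp_all add: insert_commute)
  qed
  then have "is_cycle E [u, v, x]" using assms(5-7) unfolding is_cycle_def by auto
  then show False using assms(1) unfolding acyclic_graph_def by blast
qed

lemma leaf_edge_hanging_off_edge:
  assumes eS: "e \<in> S" and "w \<in> e" "x \<notin> e" and leaf: "leaf_edge S {w, x}"
    and "g \<in> S" "x \<in> g"
  shows "g = {w, x}"
proof -
  obtain z where z: "z \<in> {w, x}" "\<forall>g\<in>S. z \<in> g \<longrightarrow> g = {w, x}"
    using leaf unfolding leaf_edge_iff by blast
  have "z \<noteq> w"
  proof
    assume "z = w"
    then have "e = {w, x}" using z(2) eS \<open>w \<in> e\<close> by simp
    then show False using \<open>x \<notin> e\<close> by simp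
  qed
  then have "z = x" using z(1) by simp
  then show ?thesis using z(2) \<open>g \<in> S\<close> \<open>x \<in> g\<close> by simp
qed

lemma edge_meets_sole_non_leaf_edge:
  assumes c2: "\<forall>f\<in>S. card f = 2" and conn: "connected_graph (\<Union>S) S"
    and eS: "e \<in> S" and leaves: "\<forall>f\<in>S. f \<noteq> e \<longrightarrow> leaf_edge S f"
    and fS: "f \<in> S"
  shows "f \<inter> e \<noteq> {}"
proof -
  have hanging: "g = {w, x}" if "{w, x} \<in> S" "w \<in> e" "x \<notin> e" "g \<in> S" "x \<in> g" for w x g
  proof -
    have "{w, x} \<noteq> e" using \<open>x \<notin> e\<close> by blast
    then have "leaf_edge S {w, x}" using leaves that(1) by simp
    then show ?thesis using leaf_edge_hanging_off_edge[OF eS] that(2-5) by blast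
  qed
  \<comment> \<open>The vertices of e and their neighbours form a set closed under adjacency.\<close>
  define W where "W = {x. x \<in> e \<or> (\<exists>w\<in>e. {w, x} \<in> S)}"
  have reach_W: "x \<in> W" if "(adj S)\<^sup>*\<^sup>* r x" "r \<in> e" for r x
    using that
  proof (induction rule: rtranclp_induct)
    case (step y z)
    have yz: "{y, z} \<in> S" using step.hyps(2) unfolding adj_def .
    show ?case
    proof (cases "y \<in> e")
      case True
      then show ?thesis using yz unfolding W_def by blast
    next
      case False
      then obtain w where w: "w \<in> e" "{w, y} \<in> S" using step.IH step.prems unfolding W_def by blast
      have "{y, z} = {w, y}" using hanging[OF w(2,1) False yz] by simp
      then have "z = w \<or> z = y" by (auto simp: doubleton_eq_iff)
      then show ?thesis using w(1) step.IH step.prems unfolding W_def by blast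
    qed
  qed (simp add: W_def)
  obtain r where r: "r \<in> e" using c2 eS by (auto simp: card_2_iff)
  obtain x where x: "x \<in> f" using c2 fS by (auto simp: card_2_iff)
  have "(adj S)\<^sup>*\<^sup>* r x"
    using conn UnionI[OF eS r] UnionI[OF fS x] unfolding connected_graph_def by blast
  then have "x \<in> W" using reach_W r by blast
  show ?thesis
  proof (cases "x \<in> e")
    case False
    then obtain w where w: "w \<in> e" "{w, x} \<in> S" using \<open>x \<in> W\<close> unfolding W_def by blast
    then have "f = {w, x}" using hanging[OF w(2,1) False fS x] by simp
    then show ?thesis using w(1) by blast
  qed (use x in blast)
qed

lemma leaf_edge_of_star:
  assumes c2E: "\<forall>f\<in>E. card f = 2" and acyc: "acyclic_graph E"
    and eE: "{u, v} \<in> E" and uv: "u \<noteq> v"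
    and A: "A \<subseteq> incident E u - {{u, v}}" and B: "B \<subseteq> incident E v - {{u, v}}"
    and fA: "f \<in> A"
  shows "leaf_edge (insert {u, v} (A \<union> B)) f"
proof -
  have f: "f \<in> E" "u \<in> f" "f \<noteq> {u, v}" using A fA unfolding incident_def by blast+
  obtain x where fx: "f = {u, x}" "x \<noteq> u" using card_2_obtain_other[of f u] c2E f(1,2) by blast
  have xv: "x \<noteq> v" using fx(1) f(3) by blast
  have "h = f" if h: "h \<in> insert {u, v} (A \<union> B)" "x \<in> h" for h
  proof -
    consider "h = {u, v}" | "h \<in> A" | "h \<in> B" using h(1) by blast
    then show ?thesis
    proof cases
      case 1
      then show ?thesis using h(2) fx(2) xv by blast
    next
      case 2
      then have "h \<in> E" "u \<in> h" using A unfolding incident_def by blast+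
      then show ?thesis using card_2_eq_doubleton[of h u x] c2E h(2) fx by simp
    next
      case 3
      then have "h \<in> E" "v \<in> h" using B unfolding incident_def by blast+
      then have "h = {v, x}" using card_2_eq_doubleton[of h v x] c2E h(2) xv by simp
      then have "{v, x} \<in> E" using \<open>h \<in> E\<close> by simp
      then show ?thesis
        using acyclic_graph_no_triangle[OF acyc eE _ _ uv fx(2) xv] f(1) fx(1) by blast
    qed
  qed
  then show ?thesis unfolding leaf_edge_iff using fA fx(1) by blast
qed

lemma star_subtree_with_sole_interior_edge:
  assumes c2E: "\<forall>f\<in>E. card f = 2" and acyc: "acyclic_graph E"
    and eE: "{u, v} \<in> E" and uv: "u \<noteq> v"
    and A: "A \<subseteq> incident E u - {{u, v}}" and B: "B \<subseteq> incident E v - {{u, v}}"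
    and "A \<noteq> {}" "B \<noteq> {}"
  defines "S \<equiv> insert {u, v} (A \<union> B)"
  shows "subtree E S" and "{f\<in>S. interior_edge S f} = {{u, v}}"
proof -
  have SE: "S \<subseteq> E" using eE A B unfolding S_def incident_def by blast
  have "\<forall>z\<in>{u, v}. \<exists>f\<in>S. z \<in> f \<and> f \<noteq> {u, v}"
    using \<open>A \<noteq> {}\<close> \<open>B \<noteq> {}\<close> A B unfolding S_def incident_def by blast
  then have interior: "interior_edge S {u, v}" unfolding interior_edge_iff S_def by blast
  have leaves: "leaf_edge S f" if "f \<in> A \<union> B" for f
  proof (cases "f \<in> A")
    case True
    then show ?thesis using leaf_edge_of_star[OF c2E acyc eE uv A B] unfolding S_def by blast
  next
    case False
    then have "f \<in> B" using that by blast
    have "{v, u} \<in> E" "B \<subseteq> incident E v - {{v, u}}" "A \<subseteq> incident E u - {{v, u}}"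
      using eE A B by (simp_all add: insert_commute)
    then have "leaf_edge (insert {v, u} (B \<union> A)) f"
      using leaf_edge_of_star[OF c2E acyc _ uv[symmetric] _ _ \<open>f \<in> B\<close>] by blast
    moreover have "insert {v, u} (B \<union> A) = S" unfolding S_def by (simp add: insert_commute Un_commute)
    ultimately show ?thesis by simp
  qed
  have "f = {u, v}" if f: "f \<in> S" "interior_edge S f" for f
  proof (rule ccontr)
    assume "f \<noteq> {u, v}"
    then have "f \<in> A \<union> B" using f(1) unfolding S_def by blast
    then show False using leaves f(2) unfolding interior_edge_def by blast
  qed
  then show "{f\<in>S. interior_edge S f} = {{u, v}}"
    using interior unfolding interior_edge_def by blast
  have "\<forall>h\<in>S. u \<in> h \<or> v \<in> h" using A B unfolding S_def incident_def by blast
  then have "connected_graph (\<Union>S) S"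
    using connected_graph_if_edges_meet_edge[of S u v] SE c2E unfolding S_def by blast
  then show "subtree E S" unfolding subtree_def using SE by (simp add: S_def)
qed

lemma subtree_with_sole_interior_edge_is_star:
  assumes c2E: "\<forall>f\<in>E. card f = 2" and st: "subtree E S"
    and sole: "{f\<in>S. interior_edge S f} = {{u, v}}"
  obtains A B where "A \<subseteq> incident E u - {{u, v}}" "A \<noteq> {}"
    "B \<subseteq> incident E v - {{u, v}}" "B \<noteq> {}" "S = insert {u, v} (A \<union> B)"
proof
  have SE: "S \<subseteq> E" and conn: "connected_graph (\<Union>S) S" using st unfolding subtree_def by blast+
  have interior: "interior_edge S {u, v}" using sole by blast
  then have eS: "{u, v} \<in> S" unfolding interior_edge_def by blast
  have "leaf_edge S f" if "f \<in> S" "f \<noteq> {u, v}" for f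
    using that sole unfolding interior_edge_def by blast
  then have "f \<inter> {u, v} \<noteq> {}" if "f \<in> S" for f
    using edge_meets_sole_non_leaf_edge[OF _ conn eS _ that] SE c2E by blast
  then show "S = insert {u, v} ((incident S u - {{u, v}}) \<union> (incident S v - {{u, v}}))"
    using eS unfolding incident_def by blast
  show "incident S u - {{u, v}} \<subseteq> incident E u - {{u, v}}"
    "incident S v - {{u, v}} \<subseteq> incident E v - {{u, v}}"
    using SE unfolding incident_def by blast+
  show "incident S u - {{u, v}} \<noteq> {}" "incident S v - {{u, v}} \<noteq> {}"
    using interior unfolding interior_edge_iff incident_def by blast+
qed

lemma incident_inter_incident:
  assumes "\<forall>f\<in>E. card f = 2" "u \<noteq> v"
  shows "incident E u \<inter> incident E v \<subseteq> {{u, v}}"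
proof
  fix h assume "h \<in> incident E u \<inter> incident E v"
  then have "card h = 2" "u \<in> h" "v \<in> h" using assms(1) unfolding incident_def by auto
  then show "h \<in> {{u, v}}" using card_2_eq_doubleton assms(2) by simp
qed

lemma incident_star:
  assumes c2E: "\<forall>f\<in>E. card f = 2" and uv: "u \<noteq> v"
    and A: "A \<subseteq> incident E u - {{u, v}}" and B: "B \<subseteq> incident E v - {{u, v}}"
  shows "incident (insert {u, v} (A \<union> B)) u - {{u, v}} = A"
    and "incident (insert {u, v} (A \<union> B)) v - {{u, v}} = B"
  using A B incident_inter_incident[OF c2E uv] unfolding incident_def by blast+

lemma inj_on_star:
  assumes "\<forall>f\<in>E. card f = 2" "u \<noteq> v"
  shows "inj_on (\<lambda>(A, B). insert {u, v} (A \<union> B))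
    (Pow (incident E u - {{u, v}}) \<times> Pow (incident E v - {{u, v}}))"
  by (rule inj_onI) (use incident_star[OF assms] in \<open>clarsimp, metis\<close>)

lemma card_star:
  assumes c2E: "\<forall>f\<in>E. card f = 2" and finE: "finite E" and uv: "u \<noteq> v"
    and A: "A \<subseteq> incident E u - {{u, v}}" and B: "B \<subseteq> incident E v - {{u, v}}"
  shows "card (insert {u, v} (A \<union> B)) = Suc (card A + card B)"
proof -
  have "A \<subseteq> E" "B \<subseteq> E" using A B unfolding incident_def by blast+
  then have "finite A" "finite B" using rev_finite_subset[OF finE] by blast+
  moreover have "A \<inter> B = {}" "{u, v} \<notin> A \<union> B"
    using A B incident_inter_incident[OF c2E uv] by blast+
  ultimately show ?thesis by (simp add: card_Un_disjoint)
qed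

lemma subtrees_with_sole_interior_edge_eq_stars:
  assumes c2E: "\<forall>f\<in>E. card f = 2" and acyc: "acyclic_graph E"
    and eE: "{u, v} \<in> E" and uv: "u \<noteq> v"
  shows "{S. subtree E S \<and> {f\<in>S. interior_edge S f} = {{u, v}}}
    = (\<lambda>(A, B). insert {u, v} (A \<union> B)) `
        ({A. A \<subseteq> incident E u - {{u, v}} \<and> A \<noteq> {}} \<times> {B. B \<subseteq> incident E v - {{u, v}} \<and> B \<noteq> {}})"
    (is "?subtrees = ?star ` ?P")
proof (intro equalityI subsetI)
  fix S assume "S \<in> ?subtrees"
  then have "subtree E S" "{f\<in>S. interior_edge S f} = {{u, v}}" by simp_all
  then obtain A B where "A \<subseteq> incident E u - {{u, v}}" "A \<noteq> {}"
    "B \<subseteq> incident E v - {{u, v}}" "B \<noteq> {}" "S = insert {u, v} (A \<union> B)"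
    by (rule subtree_with_sole_interior_edge_is_star[OF c2E])
  then show "S \<in> ?star ` ?P" by (intro image_eqI[of _ _ "(A, B)"]) simp_all
next
  fix S assume "S \<in> ?star ` ?P"
  then obtain A B where A: "A \<subseteq> incident E u - {{u, v}}" "A \<noteq> {}"
    and B: "B \<subseteq> incident E v - {{u, v}}" "B \<noteq> {}" and S: "S = insert {u, v} (A \<union> B)"
    by blast
  show "S \<in> ?subtrees"
    using star_subtree_with_sole_interior_edge[OF c2E acyc eE uv A(1) B(1) A(2) B(2)] unfolding S by simp
qed

lemma sum_subtrees_with_sole_interior_edge:
  assumes c2E: "\<forall>f\<in>E. card f = 2" and acyc: "acyclic_graph E" and finE: "finite E"
    and interior: "interior_edge E e"
  shows "(\<Sum>S | subtree E S \<and> {f\<in>S. interior_edge S f} = {e}. (-1::int) ^ card S) = -1"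
proof -
  have eE: "e \<in> E" using interior unfolding interior_edge_def by blast
  then obtain u v where e: "e = {u, v}" and uv: "u \<noteq> v" using c2E unfolding card_2_iff by blast
  define Xu where "Xu = incident E u - {{u, v}}"
  define Xv where "Xv = incident E v - {{u, v}}"
  define P where "P = {A. A \<subseteq> Xu \<and> A \<noteq> {}} \<times> {B. B \<subseteq> Xv \<and> B \<noteq> {}}"
  define star where "star = (\<lambda>(A, B). insert {u, v} (A \<union> B))"
  have Xu_Xv: "finite Xu" "Xu \<noteq> {}" "finite Xv" "Xv \<noteq> {}"
    using interior finE unfolding interior_edge_iff Xu_def Xv_def e incident_def by auto
  have "inj_on star P"
    using inj_on_star[OF c2E uv] unfolding star_def P_def Xu_def Xv_def by (rule inj_on_subset) auto
  moreover have "card (star p) = Suc (card (fst p) + card (snd p))" if "p \<in> P" for p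
    using that card_star[OF c2E finE uv] unfolding P_def star_def Xu_def Xv_def by auto
  ultimately have "(\<Sum>S\<in>star ` P. (-1::int) ^ card S) = (\<Sum>p\<in>P. - ((-1) ^ card (fst p) * (-1) ^ card (snd p)))"
    by (simp add: sum.reindex power_add)
  also have "\<dots> = - ((\<Sum>A | A \<subseteq> Xu \<and> A \<noteq> {}. (-1) ^ card A) * (\<Sum>B | B \<subseteq> Xv \<and> B \<noteq> {}. (-1) ^ card B))"
    unfolding P_def by (simp add: sum_negf sum_product sum.cartesian_product case_prod_beta)
  also have "\<dots> = -1"
    using sum_nonempty_subsets_neg_one_pow_card[OF Xu_Xv(1,2), where 'b=int]
      sum_nonempty_subsets_neg_one_pow_card[OF Xu_Xv(3,4), where 'b=int] by simp
  finally show ?thesis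
    using subtrees_with_sole_interior_edge_eq_stars[OF c2E acyc eE[unfolded e] uv]
    unfolding star_def P_def Xu_def Xv_def e by simp
qed

lemma subtrees_with_one_interior_edge_eq_UN:
  "{S. subtree E S \<and> card {e\<in>S. interior_edge S e} = 1}
    = (\<Union>e\<in>{e\<in>E. interior_edge E e}. {S. subtree E S \<and> {f\<in>S. interior_edge S f} = {e}})"
proof (intro equalityI subsetI)
  fix S assume "S \<in> {S. subtree E S \<and> card {e\<in>S. interior_edge S e} = 1}"
  then have st: "subtree E S" and "card {e\<in>S. interior_edge S e} = 1" by simp_all
  from this(2) obtain e where sole: "{f\<in>S. interior_edge S f} = {e}" by (rule card_1_singletonE)
  have "S \<subseteq> E" using st unfolding subtree_def by blast
  then have "interior_edge E e" using interior_edge_mono sole by blast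
  then show "S \<in> (\<Union>e\<in>{e\<in>E. interior_edge E e}. {S. subtree E S \<and> {f\<in>S. interior_edge S f} = {e}})"
    using st sole unfolding interior_edge_def by blast
qed auto

theorem theorem4p7:
  fixes V :: "'a set" and E :: "'a set set"
  assumes "is_tree V E"
  shows "(\<Sum>S\<in>{S. subtree E S \<and> card {e\<in>S. interior_edge S e} = 1}. (-1::int) ^ card S)
           = - int (card {e\<in>E. interior_edge E e})"
proof -
  have "simple_graph V E" and acyc: "acyclic_graph E" using assms unfolding is_tree_def by blast+
  then have c2E: "\<forall>f\<in>E. card f = 2" and "E \<subseteq> Pow V" and "finite V"
    unfolding simple_graph_def by blast+
  then have finE: "finite E" by (meson finite_Pow_iff finite_subset)
  have "finite {S. subtree E S \<and> {f\<in>S. interior_edge S f} = {e}}" for e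
    using finite_Pow_iff[THEN iffD2, OF finE] by (rule finite_subset[rotated]) (auto simp: subtree_def)
  then have "(\<Sum>S\<in>{S. subtree E S \<and> card {e\<in>S. interior_edge S e} = 1}. (-1::int) ^ card S)
      = (\<Sum>e\<in>{e\<in>E. interior_edge E e}. \<Sum>S | subtree E S \<and> {f\<in>S. interior_edge S f} = {e}. (-1) ^ card S)"
    unfolding subtrees_with_one_interior_edge_eq_UN using finE by (subst sum.UNION_disjoint) auto
  also have "\<dots> = (\<Sum>e\<in>{e\<in>E. interior_edge E e}. -1)"
    using sum_subtrees_with_sole_interior_edge[OF c2E acyc finE] by simp
  finally show ?thesis by simp
qed

end
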